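(* For $n\ge2$, $R>1$ and $s\in(0,\tfrac12)$ there exist explicit $\delta,C>0$ depending only on $n,R,s$ such that the following holds. If $\sigma\subseteq\mathbb R^n$ is a convex cone with $r(\sigma\cap B_2^n)\ge s$, and $E,E'\subseteq\mathbb R^n$ are origin-symmetric ellipsoids with $\frac1RB_2^n\subseteq E,E'\subseteq RB_2^n$ and $|(E\Delta E')\cap\sigma|\le\delta$, then $$|E\Delta E'|\le C\,|(E\Delta E')\cap\sigma|.$$
   Context: $r(\cdot)$ denotes the inradius (maximal radius of a Euclidean ball contained in the set), $B_2^n$ the Euclidean unit ball, $|\cdot|$ Lebesgue measure, $\Delta$ symmetric difference. A convex cone here has apex at the origin. *)

theory Defs
  imports "HOL-Analysis.Analysis"
begin

definition inradius :: "'a::euclidean_space set \<Rightarrow> real" where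
  "inradius S = Sup {r. 0 \<le> r \<and> (\<exists>x. cball x r \<subseteq> S)}"

definition sym_ellipsoid :: "'a::euclidean_space set \<Rightarrow> bool" where
  "sym_ellipsoid S \<longleftrightarrow> (\<exists>T::'a \<Rightarrow> 'a. linear T \<and> inj T \<and> S = T ` cball 0 1)"

definition symdiff :: "'a set \<Rightarrow> 'a set \<Rightarrow> 'a set" where
  "symdiff A B = (A - B) \<union> (B - A)"

end

theory Submission
  imports Defs
begin

text \<open>Write \<open>E\<^sub>i = {x. \<parallel>S\<^sub>i x\<parallel> \<le> 1}\<close> with \<open>S\<^sub>i\<close> linear, let
  \<open>q(x) = \<parallel>S\<^sub>1 x\<parallel>\<^sup>2 - \<parallel>S\<^sub>2 x\<parallel>\<^sup>2\<close> and let \<open>M\<close> be the maximum of \<open>|q|\<close> on the unit sphere.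
  Each ellipsoid lies in the \<open>(1 + M R\<^sup>2)\<close>-dilate of the other, so \<open>|E\<^sub>1 \<Delta> E\<^sub>2| = O(M)\<close>.
  Conversely, \<open>\<sigma> \<inter> B\<^sub>2\<^sup>n\<close> contains a ball of radius \<open>s/2\<close>; the second-difference identity
  for \<open>q\<close> finds in it a smaller ball of radius \<open>\<sim> s\<^sup>2\<close> on which \<open>q\<close> has constant sign and
  size \<open>\<gtrsim> M s\<^sup>2\<close>. On the cone over that ball one ellipsoid lies inside a fixed contraction of
  the other, which forces \<open>|(E\<^sub>1 \<Delta> E\<^sub>2) \<inter> \<sigma>| \<gtrsim> M\<close>. The ratio is therefore bounded outright.\<close>

lemma sym_ellipsoid_sublevel:
  fixes E :: "'a::euclidean_space set"
  assumes "sym_ellipsoid E"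
  obtains S :: "'a \<Rightarrow> 'a" where "linear S" "E = {x. norm (S x) \<le> 1}"
proof -
  obtain T :: "'a \<Rightarrow> 'a" where T: "linear T" "inj T" "E = T ` cball 0 1"
    using assms unfolding sym_ellipsoid_def by blast
  obtain S where S: "linear S" "S \<circ> T = id"
    using linear_injective_left_inverse[OF T(1,2)] by blast
  have ST: "S (T y) = y" for y
    using S(2) by (metis comp_apply id_apply)
  have TS: "T (S x) = x" for x
    using linear_injective_imp_surjective[OF T(1,2)] by (metis ST surjD)
  have "E = {x. norm (S x) \<le> 1}"
    unfolding T(3) by (auto simp: ST) (metis TS imageI mem_cball_0)
  with S(1) show thesis by (rule that)
qed

lemma norm_le_of_cball_subset_sublevel:
  fixes S :: "'a::real_normed_vector \<Rightarrow> 'b::real_normed_vector"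
  assumes "linear S" "R > 0" "cball 0 (1/R) \<subseteq> {x. norm (S x) \<le> 1}"
  shows "norm (S x) \<le> R * norm x"
proof (cases "x = 0")
  case True
  then show ?thesis using assms(1) by (simp add: linear_0)
next
  case False
  define z where "z = (1 / (R * norm x)) *\<^sub>R x"
  have "z \<in> cball 0 (1/R)"
    unfolding z_def using False assms(2) by simp
  then have "norm (S z) \<le> 1" using assms(3) by blast
  moreover have "norm (S z) = norm (S x) / (R * norm x)"
    unfolding z_def using linear_cmul[OF assms(1)] False assms(2) by simp
  ultimately show ?thesis using False assms(2) by (simp add: divide_le_eq mult_ac)
qed

lemma lmeasurable_sublevel_linear:
  fixes S :: "'a::euclidean_space \<Rightarrow> 'b::real_normed_vector"
  assumes "linear S" "bounded {x. norm (S x) \<le> 1}"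
  shows "{x. norm (S x) \<le> 1} \<in> lmeasurable"
proof -
  have "continuous_on UNIV S"
    using assms(1) by (simp add: linear_continuous_on linear_conv_bounded_linear)
  then have "closed {x. norm (S x) \<le> 1}"
    by (intro closed_Collect_le continuous_intros) auto
  with assms(2) show ?thesis
    by (intro lmeasurable_compact) (simp add: compact_eq_bounded_closed)
qed

lemma scaleR_image_sublevel:
  fixes S :: "'a::real_normed_vector \<Rightarrow> 'b::real_normed_vector"
  assumes "linear S" "c > 0"
  shows "(\<lambda>x. c *\<^sub>R x) ` {x. norm (S x) \<le> 1} = {x. norm (S x) \<le> c}"
proof (intro subset_antisym subsetI)
  fix x
  assume "x \<in> (\<lambda>x. c *\<^sub>R x) ` {x. norm (S x) \<le> 1}"
  then show "x \<in> {x. norm (S x) \<le> c}"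
    using assms by (auto simp: linear_cmul mult_left_le)
next
  fix x :: 'a
  assume "x \<in> {x. norm (S x) \<le> c}"
  then have "x /\<^sub>R c \<in> {x. norm (S x) \<le> 1}"
    using assms by (simp add: linear_cmul field_simps)
  moreover have "x = c *\<^sub>R (x /\<^sub>R c)"
    using assms(2) by simp
  ultimately show "x \<in> (\<lambda>x. c *\<^sub>R x) ` {x. norm (S x) \<le> 1}"
    by blast
qed

text \<open>For \<open>E\<^sub>i = {x. \<parallel>S\<^sub>i x\<parallel> \<le> 1}\<close>, the sign of \<open>gap_form S\<^sub>1 S\<^sub>2\<close> on a ray tells
  which of the two ellipsoids is larger in that direction.\<close>

definition gap_form :: "('a::real_inner \<Rightarrow> 'b::real_inner) \<Rightarrow> ('a \<Rightarrow> 'b) \<Rightarrow> 'a \<Rightarrow> real" where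
  "gap_form S1 S2 x = (norm (S1 x))\<^sup>2 - (norm (S2 x))\<^sup>2"

definition gap_bilinear :: "('a::real_inner \<Rightarrow> 'b::real_inner) \<Rightarrow> ('a \<Rightarrow> 'b) \<Rightarrow> 'a \<Rightarrow> 'a \<Rightarrow> real" where
  "gap_bilinear S1 S2 x y = S1 x \<bullet> S1 y - S2 x \<bullet> S2 y"

context
  fixes S1 S2 :: "'a::real_inner \<Rightarrow> 'b::real_inner"
  assumes lin: "linear S1" "linear S2"
begin

lemma gap_form_scaleR: "gap_form S1 S2 (c *\<^sub>R x) = c\<^sup>2 * gap_form S1 S2 x"
  using lin by (simp add: gap_form_def linear_cmul power_mult_distrib algebra_simps)

lemma gap_form_0: "gap_form S1 S2 0 = 0"
  using gap_form_scaleR[of 0 0] by simp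

lemma gap_form_add:
  "gap_form S1 S2 (x + y) = gap_form S1 S2 x + 2 * gap_bilinear S1 S2 x y + gap_form S1 S2 y"
  using lin by (simp add: gap_form_def gap_bilinear_def linear_add power2_norm_eq_inner
      inner_add inner_commute algebra_simps)

lemma gap_form_diff:
  "gap_form S1 S2 (x - y) = gap_form S1 S2 x - 2 * gap_bilinear S1 S2 x y + gap_form S1 S2 y"
  using lin by (simp add: gap_form_def gap_bilinear_def linear_diff power2_norm_eq_inner
      inner_diff inner_commute algebra_simps)

lemma gap_bilinear_scaleR:
  "gap_bilinear S1 S2 (c *\<^sub>R x) (d *\<^sub>R y) = c * d * gap_bilinear S1 S2 x y"
  using lin by (simp add: gap_bilinear_def linear_cmul algebra_simps)

lemma gap_form_second_difference:
  "gap_form S1 S2 (x + v) + gap_form S1 S2 (x - v) - 2 * gap_form S1 S2 x = 2 * gap_form S1 S2 v"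
  using gap_form_add[of x v] gap_form_diff[of x v] by simp

lemma gap_form_le_sphere_bound:
  assumes "\<And>u. norm u = 1 \<Longrightarrow> \<bar>gap_form S1 S2 u\<bar> \<le> M"
  shows "\<bar>gap_form S1 S2 x\<bar> \<le> M * (norm x)\<^sup>2"
proof (cases "x = 0")
  case True
  then show ?thesis by (simp add: gap_form_0)
next
  case False
  have "gap_form S1 S2 x = (norm x)\<^sup>2 * gap_form S1 S2 (sgn x)"
    using gap_form_scaleR[of "norm x" "sgn x"] False by (simp add: sgn_div_norm)
  then have "\<bar>gap_form S1 S2 x\<bar> = \<bar>gap_form S1 S2 (sgn x)\<bar> * (norm x)\<^sup>2"
    by (simp add: abs_mult)
  also have "\<dots> \<le> M * (norm x)\<^sup>2"
    using assms False by (intro mult_right_mono) (simp_all add: norm_sgn)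
  finally show ?thesis .
qed

lemma gap_bilinear_le_sphere_bound:
  assumes bound: "\<And>u. norm u = 1 \<Longrightarrow> \<bar>gap_form S1 S2 u\<bar> \<le> M"
  shows "\<bar>gap_bilinear S1 S2 x y\<bar> \<le> M * norm x * norm y"
proof (cases "x = 0 \<or> y = 0")
  case True
  then show ?thesis using lin by (auto simp: gap_bilinear_def linear_0)
next
  case False
  define u where "u = sgn x"
  define w where "w = sgn y"
  have unit: "norm u = 1" "norm w = 1"
    using False by (auto simp: u_def w_def norm_sgn)
  have "gap_bilinear S1 S2 x y = norm x * norm y * gap_bilinear S1 S2 u w"
    using gap_bilinear_scaleR[of "norm x" u "norm y" w] False by (simp add: u_def w_def sgn_div_norm)
  then have "\<bar>gap_bilinear S1 S2 x y\<bar> = norm x * norm y * \<bar>gap_bilinear S1 S2 u w\<bar>"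
    by (simp add: abs_mult)
  moreover have "\<bar>gap_bilinear S1 S2 u w\<bar> \<le> M"
  proof -
    \<comment> \<open>polarization, and the parallelogram law for the unit vectors \<open>u\<close>, \<open>w\<close>\<close>
    have "4 * gap_bilinear S1 S2 u w = gap_form S1 S2 (u + w) - gap_form S1 S2 (u - w)"
      using gap_form_add[of u w] gap_form_diff[of u w] by simp
    moreover have "(norm (u + w))\<^sup>2 + (norm (u - w))\<^sup>2 = 4"
      using unit by (simp add: power2_norm_eq_inner inner_add inner_diff inner_commute norm_eq_1)
    then have "M * (norm (u + w))\<^sup>2 + M * (norm (u - w))\<^sup>2 = 4 * M"
      by (simp add: distrib_left[symmetric])
    moreover have "\<bar>gap_form S1 S2 (u + w)\<bar> \<le> M * (norm (u + w))\<^sup>2"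
      and "\<bar>gap_form S1 S2 (u - w)\<bar> \<le> M * (norm (u - w))\<^sup>2"
      using gap_form_le_sphere_bound[OF bound] by blast+
    ultimately show ?thesis
      by linarith
  qed
  ultimately show ?thesis
    using mult_left_mono[of "\<bar>gap_bilinear S1 S2 u w\<bar>" M "norm x * norm y"] by (simp add: mult_ac)
qed

lemma gap_form_close:
  assumes bound: "\<And>u. norm u = 1 \<Longrightarrow> \<bar>gap_form S1 S2 u\<bar> \<le> M" and M: "0 \<le> M"
    and y: "norm y \<le> 1" and xy: "dist y x \<le> \<rho>" and \<rho>: "\<rho> \<le> 1"
  shows "\<bar>gap_form S1 S2 x - gap_form S1 S2 y\<bar> \<le> 3 * M * \<rho>"
proof -
  define d where "d = x - y"
  have d: "norm d \<le> \<rho>"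
    using xy by (simp add: d_def dist_norm norm_minus_commute)
  have "gap_form S1 S2 x - gap_form S1 S2 y = 2 * gap_bilinear S1 S2 y d + gap_form S1 S2 d"
    using gap_form_add[of y d] by (simp add: d_def)
  moreover have "\<bar>gap_bilinear S1 S2 y d\<bar> \<le> M * \<rho>"
  proof -
    have "\<bar>gap_bilinear S1 S2 y d\<bar> \<le> M * norm y * norm d"
      by (rule gap_bilinear_le_sphere_bound[OF bound])
    also have "\<dots> \<le> M * 1 * \<rho>"
      using y d M by (intro mult_mono) (auto intro: mult_left_mono)
    finally show ?thesis by simp
  qed
  moreover have "\<bar>gap_form S1 S2 d\<bar> \<le> M * \<rho>"
  proof -
    have "(norm d)\<^sup>2 \<le> \<rho>"
      using d \<rho> norm_ge_zero[of d] unfolding power2_eq_square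
      by (meson mult_le_one order_trans mult_right_le_one_le)
    then have "M * (norm d)\<^sup>2 \<le> M * \<rho>"
      using M by (rule mult_left_mono)
    then show ?thesis
      using gap_form_le_sphere_bound[OF bound, of d] by linarith
  qed
  ultimately show ?thesis by linarith
qed

lemma exists_near_gap_form_ge:
  assumes "norm v = 1" "h \<ge> 0"
  obtains y where "dist x y \<le> h" "h\<^sup>2 * \<bar>gap_form S1 S2 v\<bar> / 2 \<le> \<bar>gap_form S1 S2 y\<bar>"
proof -
  have "gap_form S1 S2 (x + h *\<^sub>R v) + gap_form S1 S2 (x - h *\<^sub>R v) - 2 * gap_form S1 S2 x
      = 2 * h\<^sup>2 * gap_form S1 S2 v"
    using gap_form_second_difference[of x "h *\<^sub>R v"] by (simp add: gap_form_scaleR)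
  then have "\<exists>y \<in> {x + h *\<^sub>R v, x - h *\<^sub>R v, x}. h\<^sup>2 * \<bar>gap_form S1 S2 v\<bar> / 2 \<le> \<bar>gap_form S1 S2 y\<bar>"
    by (auto simp: abs_mult)
  moreover have "dist x y \<le> h" if "y \<in> {x + h *\<^sub>R v, x - h *\<^sub>R v, x}" for y
    using that assms by (auto simp: dist_norm)
  ultimately show thesis
    using that by blast
qed

end

lemma gap_form_swap: "gap_form S2 S1 x = - gap_form S1 S2 x"
  by (simp add: gap_form_def)

lemma continuous_on_gap_form:
  fixes S1 S2 :: "'a::euclidean_space \<Rightarrow> 'b::euclidean_space"
  assumes "linear S1" "linear S2"
  shows "continuous_on A (gap_form S1 S2)"
proof -
  have "continuous_on A S1" "continuous_on A S2"
    using assms by (simp_all add: linear_continuous_on linear_conv_bounded_linear)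
  then show ?thesis
    unfolding gap_form_def[abs_def] by (intro continuous_intros)
qed

lemma gap_form_attains_max_on_sphere:
  fixes S1 S2 :: "'a::euclidean_space \<Rightarrow> 'b::euclidean_space"
  assumes "linear S1" "linear S2"
  obtains v where "norm v = 1" "\<And>u. norm u = 1 \<Longrightarrow> \<bar>gap_form S1 S2 u\<bar> \<le> \<bar>gap_form S1 S2 v\<bar>"
proof -
  have "continuous_on (sphere 0 1) (\<lambda>u. \<bar>gap_form S1 S2 u\<bar>)"
    using continuous_on_gap_form[OF assms] by (intro continuous_intros)
  moreover have "sphere (0::'a) 1 \<noteq> {}"
    by simp
  ultimately obtain v where "v \<in> sphere (0::'a) 1" "\<forall>u\<in>sphere 0 1. \<bar>gap_form S1 S2 u\<bar> \<le> \<bar>gap_form S1 S2 v\<bar>"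
    using continuous_attains_sup[OF compact_sphere] by blast
  then show thesis
    using that by simp
qed

lemma gap_form_le_of_norm_le:
  assumes "norm (S1 u) \<le> R" "norm (S2 u) \<le> R"
  shows "\<bar>gap_form S1 S2 u\<bar> \<le> R\<^sup>2"
proof -
  have "(norm (S1 u))\<^sup>2 \<le> R\<^sup>2" "(norm (S2 u))\<^sup>2 \<le> R\<^sup>2"
    using assms by (auto intro: power_mono)
  then show ?thesis
    using zero_le_power2[of "norm (S1 u)"] zero_le_power2[of "norm (S2 u)"]
    unfolding gap_form_def abs_le_iff by linarith
qed

lemma conic_gap_form_ge:
  assumes "linear S1" "linear S2"
  shows "conic {z. \<kappa> * (norm z)\<^sup>2 \<le> gap_form S1 S2 z}"
unfolding conic_def proof (intro allI impI)
  fix z and c :: real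
  assume "z \<in> {z. \<kappa> * (norm z)\<^sup>2 \<le> gap_form S1 S2 z}"
  then have "c\<^sup>2 * (\<kappa> * (norm z)\<^sup>2) \<le> c\<^sup>2 * gap_form S1 S2 z"
    by (simp add: mult_left_mono)
  then show "c *\<^sub>R z \<in> {z. \<kappa> * (norm z)\<^sup>2 \<le> gap_form S1 S2 z}"
    by (simp add: gap_form_scaleR[OF assms] power_mult_distrib mult_ac)
qed

lemma norm_sq_le_of_gap_form_ge:
  assumes "R > 0" "norm (S1 z) \<le> R * norm z" "norm (S1 z) \<le> 1"
    and "\<kappa> * (norm z)\<^sup>2 \<le> gap_form S1 S2 z" "0 \<le> \<kappa>" "\<kappa> \<le> R\<^sup>2"
  shows "(norm (S2 z))\<^sup>2 \<le> 1 - \<kappa> / R\<^sup>2"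
proof -
  have "(norm (S1 z))\<^sup>2 \<le> R\<^sup>2 * (norm z)\<^sup>2"
    using assms(2) by (metis norm_ge_zero power_mono power_mult_distrib)
  then have "\<kappa> / R\<^sup>2 * (norm (S1 z))\<^sup>2 \<le> \<kappa> * (norm z)\<^sup>2"
    using assms(1,5) by (simp add: field_simps mult_left_mono)
  then have "(norm (S2 z))\<^sup>2 \<le> (1 - \<kappa> / R\<^sup>2) * (norm (S1 z))\<^sup>2"
    using assms(4) unfolding gap_form_def by (simp add: algebra_simps)
  also have "\<dots> \<le> 1 - \<kappa> / R\<^sup>2"
    using assms(1,3,6) by (intro mult_left_le) (auto simp: power_le_one field_simps)
  finally show ?thesis .
qed

lemma lmeasurable_scaleR_image:
  fixes S :: "'a::euclidean_space set"
  assumes "S \<in> lmeasurable" "c \<noteq> 0"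
  shows "(\<lambda>x. c *\<^sub>R x) ` S \<in> lmeasurable"
proof -
  have "(\<lambda>x. c *\<^sub>R x) ` S = (\<lambda>x. inverse c *\<^sub>R x) -` S \<inter> space lebesgue"
    using assms(2) by (force simp: image_iff)
  then have "(\<lambda>x. c *\<^sub>R x) ` S \<in> sets lebesgue"
    using measurable_sets[OF lebesgue_measurable_scaling fmeasurableD[OF assms(1)]] by simp
  moreover have "emeasure lebesgue ((\<lambda>x. c *\<^sub>R x) ` S) < \<infinity>"
  proof -
    have "emeasure lebesgue ((\<lambda>x. c *\<^sub>R x) ` S) = ennreal (\<bar>c\<bar> ^ DIM('a)) * emeasure lebesgue S"
      using emeasure_lebesgue_affine[of c 0 S] by simp
    moreover have "emeasure lebesgue S < \<infinity>"
      using assms(1) unfolding fmeasurable_def by blast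
    ultimately show ?thesis
      unfolding infinity_ennreal_def by (metis ennreal_mult_less_top ennreal_less_top)
  qed
  ultimately show ?thesis
    unfolding fmeasurable_def by blast
qed

lemma measure_scaleR_image_diff:
  fixes S :: "'a::euclidean_space set"
  assumes "S \<in> lmeasurable" "c \<ge> 1" "S \<subseteq> (\<lambda>x. c *\<^sub>R x) ` S"
  shows "measure lebesgue ((\<lambda>x. c *\<^sub>R x) ` S - S) = (c ^ DIM('a) - 1) * measure lebesgue S"
proof -
  have "measure lebesgue ((\<lambda>x. c *\<^sub>R x) ` S - S)
      = measure lebesgue ((\<lambda>x. c *\<^sub>R x) ` S) - measure lebesgue S"
    using assms lmeasurable_scaleR_image[OF assms(1), of c]
    by (intro measurable_measure_Diff) (auto intro: fmeasurableD)
  also have "measure lebesgue ((\<lambda>x. c *\<^sub>R x) ` S) = c ^ DIM('a) * measure lebesgue S"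
    using measure_lebesgue_affine[of c 0 S] assms(2) by simp
  finally show ?thesis
    by (simp add: algebra_simps)
qed

lemma sets_lebesgue_convex:
  fixes S :: "'a::euclidean_space set"
  assumes "convex S"
  shows "S \<in> sets lebesgue"
proof -
  have "S \<inter> cball 0 (real n) \<in> sets lebesgue" for n
    using measurable_convex[of "S \<inter> cball 0 (real n)"] assms
    by (auto simp: convex_Int fmeasurable_def)
  then have "(\<Union>n. S \<inter> cball 0 (real n)) \<in> sets lebesgue"
    by (intro sets.countable_UN) auto
  moreover have "S = (\<Union>n. S \<inter> cball 0 (real n))"
    by (auto simp: real_arch_simple)
  ultimately show ?thesis
    by simp
qed

lemma measure_lebesgue_cball:
  fixes c :: "'a::euclidean_space"
  assumes "r \<ge> 0"
  shows "measure lebesgue (cball c r) = unit_ball_vol DIM('a) * r ^ DIM('a)"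
  using content_cball[OF assms, of c] by (simp add: measure_completion)

lemma inradius_cball_subset:
  fixes S :: "'a::euclidean_space set"
  assumes "bounded S" "S \<noteq> {}" "t < inradius S"
  obtains c where "cball c t \<subseteq> S"
proof -
  define A where "A = {r. 0 \<le> r \<and> (\<exists>x. cball x r \<subseteq> S)}"
  have "0 \<in> A"
    using assms(2) by (auto simp: A_def)
  moreover obtain a K where K: "S \<subseteq> cball a K"
    using assms(1) bounded_subset_cball by blast
  have "r \<le> K" if r: "r \<in> A" for r
  proof -
    obtain x where "0 \<le> r" "cball x r \<subseteq> S"
      using r by (auto simp: A_def)
    with K have "cball x r \<subseteq> cball a K"
      by blast
    then have "dist x a + r \<le> K"
      using \<open>0 \<le> r\<close> by (auto simp: cball_subset_cball_iff)
    then show ?thesis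
      using zero_le_dist[of x a] by linarith
  qed
  then have "bdd_above A"
    by (rule bdd_aboveI)
  ultimately obtain r where r: "r \<in> A" "t < r"
    using assms(3) less_cSup_iff[of A t] unfolding inradius_def A_def by blast
  then obtain c where "cball c r \<subseteq> S"
    by (auto simp: A_def)
  moreover have "cball c t \<subseteq> cball c r"
    using r(2) by (simp add: subset_cball)
  ultimately show thesis
    using that by blast
qed

lemma power_sub_one_le:
  fixes h :: real
  assumes "h \<ge> 0"
  shows "(1 + h) ^ n - 1 \<le> real n * h * (1 + h) ^ n"
proof -
  have "(\<Sum>i<n. (1 + h) ^ i) \<le> real n * (1 + h) ^ n"
    using sum_bounded_above[of "{..<n}" "\<lambda>i. (1 + h) ^ i" "(1 + h) ^ n"] assms
    by (simp add: power_increasing)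
  then have "h * (\<Sum>i<n. (1 + h) ^ i) \<le> h * (real n * (1 + h) ^ n)"
    using assms by (rule mult_left_mono)
  then show ?thesis
    using power_diff_1_eq[of "1 + h" n] by (simp add: mult_ac)
qed

lemma inverse_sqrt_sub_one_ge:
  assumes "0 < \<theta>" "\<theta> \<le> 1"
  shows "(1 - \<theta>) / 2 \<le> 1 / sqrt \<theta> - 1"
proof -
  define a where "a = sqrt \<theta>"
  have a: "0 < a" "a \<le> 1" "\<theta> = a\<^sup>2"
    using assms by (auto simp: a_def)
  have "0 \<le> (1 - a) * (1 - a)"
    by simp
  then have "1 - \<theta> \<le> 2 * (1 - a)"
    using a(3) by (simp add: power2_eq_square algebra_simps)
  then have "(1 - \<theta>) / 2 \<le> 1 - a"
    by simp
  moreover have "(1 - a) * a \<le> 1 - a"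
    using a by (intro mult_left_le) auto
  then have "1 - a \<le> 1 / a - 1"
    using a by (simp add: field_simps)
  ultimately show ?thesis
    by (simp add: a_def)
qed

lemma measure_diff_sublevel_le:
  fixes S1 S2 :: "'a::euclidean_space \<Rightarrow> 'b::euclidean_space"
  assumes lin: "linear S1" "linear S2" and M: "M \<ge> 0"
    and E1: "E1 = {x. norm (S1 x) \<le> 1}" "E1 \<subseteq> cball 0 R" "E1 \<in> lmeasurable"
    and E2: "E2 = {x. norm (S2 x) \<le> 1}" "E2 \<in> lmeasurable"
    and bound: "\<And>u. norm u = 1 \<Longrightarrow> \<bar>gap_form S1 S2 u\<bar> \<le> M"
  shows "measure lebesgue (E1 - E2) \<le> ((1 + M * R\<^sup>2) ^ DIM('a) - 1) * measure lebesgue E2"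
proof -
  define l where "l = 1 + M * R\<^sup>2"
  have l: "l \<ge> 1"
    using M by (simp add: l_def)
  have dilate: "(\<lambda>x. l *\<^sub>R x) ` E2 = {x. norm (S2 x) \<le> l}"
    using scaleR_image_sublevel[OF lin(2), of l] l E2(1) by simp
  have "E1 \<subseteq> (\<lambda>x. l *\<^sub>R x) ` E2"
  proof
    fix x
    assume x: "x \<in> E1"
    have "(norm (S2 x))\<^sup>2 = (norm (S1 x))\<^sup>2 - gap_form S1 S2 x"
      by (simp add: gap_form_def)
    also have "\<dots> \<le> 1 + M * (norm x)\<^sup>2"
    proof -
      have "(norm (S1 x))\<^sup>2 \<le> 1"
        using x E1(1) by (simp add: power_le_one_iff)
      then show ?thesis
        using gap_form_le_sphere_bound[OF lin bound, of x] by (simp add: abs_le_iff)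
    qed
    also have "\<dots> \<le> l"
      using x E1(2) M by (auto simp: l_def intro!: mult_left_mono power_mono)
    also have "\<dots> \<le> l\<^sup>2"
      using l by (simp add: power2_eq_square mult_le_cancel_left1)
    finally have "norm (S2 x) \<le> l"
      by (rule power2_le_imp_le) (use l in simp)
    then show "x \<in> (\<lambda>x. l *\<^sub>R x) ` E2"
      unfolding dilate by simp
  qed
  moreover have E2_dilate: "E2 \<subseteq> (\<lambda>x. l *\<^sub>R x) ` E2"
    unfolding dilate using l by (auto simp: E2(1))
  ultimately have "measure lebesgue (E1 - E2) \<le> measure lebesgue ((\<lambda>x. l *\<^sub>R x) ` E2 - E2)"
    using E1(3) E2(2) lmeasurable_scaleR_image[OF E2(2), of l] l
    by (intro measure_mono_fmeasurable) (auto intro: fmeasurableD)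
  also have "\<dots> = (l ^ DIM('a) - 1) * measure lebesgue E2"
    using E2(2) l E2_dilate by (rule measure_scaleR_image_diff)
  finally show ?thesis
    by (simp add: l_def)
qed

lemma one_add_mult_power_sub_one_le:
  fixes M R :: real
  assumes "0 \<le> M" "M \<le> R\<^sup>2"
  shows "(1 + M * R\<^sup>2) ^ n - 1 \<le> real n * R\<^sup>2 * (1 + R ^ 4) ^ n * M"
proof -
  have "0 \<le> M * R\<^sup>2"
    using assms(1) by simp
  moreover have "M * R\<^sup>2 \<le> R ^ 4"
    using mult_right_mono[OF assms(2), of "R\<^sup>2"] by (simp add: power2_eq_square power4_eq_xxxx)
  ultimately have "real n * (M * R\<^sup>2) * (1 + M * R\<^sup>2) ^ n \<le> real n * (M * R\<^sup>2) * (1 + R ^ 4) ^ n"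
    by (intro mult_left_mono power_mono) auto
  with power_sub_one_le[OF \<open>0 \<le> M * R\<^sup>2\<close>, of n] show ?thesis
    by (simp add: mult_ac)
qed

lemma measure_symdiff_le_gap_form:
  fixes S1 S2 :: "'a::euclidean_space \<Rightarrow> 'b::euclidean_space"
  assumes lin: "linear S1" "linear S2" and R: "R > 0"
    and E1: "E1 = {x. norm (S1 x) \<le> 1}" "cball 0 (1/R) \<subseteq> E1" "E1 \<subseteq> cball 0 R"
    and E2: "E2 = {x. norm (S2 x) \<le> 1}" "cball 0 (1/R) \<subseteq> E2" "E2 \<subseteq> cball 0 R"
    and v: "norm v = 1" "\<And>u. norm u = 1 \<Longrightarrow> \<bar>gap_form S1 S2 u\<bar> \<le> \<bar>gap_form S1 S2 v\<bar>"
  shows "measure lebesgue (symdiff E1 E2)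
    \<le> 2 * real DIM('a) * R\<^sup>2 * (1 + R ^ 4) ^ DIM('a) * (unit_ball_vol DIM('a) * R ^ DIM('a))
       * \<bar>gap_form S1 S2 v\<bar>"
proof -
  define n where "n = DIM('a)"
  define M where "M = \<bar>gap_form S1 S2 v\<bar>"
  define V where "V = unit_ball_vol n * R ^ n"
  have "norm (S1 v) \<le> R" "norm (S2 v) \<le> R"
    using norm_le_of_cball_subset_sublevel[OF lin(1) R, of v]
      norm_le_of_cball_subset_sublevel[OF lin(2) R, of v] E1(1,2) E2(1,2) v(1)
    by simp_all
  then have "\<bar>gap_form S1 S2 v\<bar> \<le> R\<^sup>2"
    by (rule gap_form_le_of_norm_le)
  then have M: "0 \<le> M" "M \<le> R\<^sup>2"
    by (simp_all add: M_def)
  have bound1: "\<bar>gap_form S1 S2 u\<bar> \<le> M" and bound2: "\<bar>gap_form S2 S1 u\<bar> \<le> M"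
    if "norm u = 1" for u
    using v(2)[OF that] by (simp_all add: M_def gap_form_swap[of S2 S1])
  have "bounded E1" "bounded E2"
    using E1(3) E2(3) by (meson bounded_cball bounded_subset)+
  then have meas: "E1 \<in> lmeasurable" "E2 \<in> lmeasurable"
    using lmeasurable_sublevel_linear[OF lin(1)] lmeasurable_sublevel_linear[OF lin(2)] E1(1) E2(1)
    by simp_all
  have vol: "measure lebesgue E1 \<le> V" "measure lebesgue E2 \<le> V"
    using measure_mono_fmeasurable[OF E1(3) fmeasurableD[OF meas(1)] lmeasurable_cball]
      measure_mono_fmeasurable[OF E2(3) fmeasurableD[OF meas(2)] lmeasurable_cball]
      measure_lebesgue_cball[of R "0::'a"] R
    by (simp_all add: V_def n_def)
  define g where "g = (1 + M * R\<^sup>2) ^ n - 1"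
  have g0: "0 \<le> g"
    using M by (simp add: g_def one_le_power)
  have g: "g \<le> real n * R\<^sup>2 * (1 + R ^ 4) ^ n * M"
    unfolding g_def using M by (rule one_add_mult_power_sub_one_le)
  have "measure lebesgue (symdiff E1 E2) \<le> measure lebesgue (E1 - E2) + measure lebesgue (E2 - E1)"
    unfolding symdiff_def using meas by (intro measure_Un_le) (auto intro: fmeasurableD)
  also have "\<dots> \<le> g * measure lebesgue E2 + g * measure lebesgue E1"
    using measure_diff_sublevel_le[OF lin M(1) E1(1,3) meas(1) E2(1) meas(2) bound1]
      measure_diff_sublevel_le[OF lin(2,1) M(1) E2(1,3) meas(2) E1(1) meas(1) bound2]
    unfolding g_def n_def by (rule add_mono)
  also have "\<dots> \<le> g * V + g * V"
    using vol g0 by (intro add_mono mult_left_mono)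
  also have "\<dots> \<le> 2 * (real n * R\<^sup>2 * (1 + R ^ 4) ^ n * M) * V"
    using g R by (simp add: V_def)
  finally show ?thesis
    by (simp add: n_def M_def V_def mult_ac)
qed

lemma cball_scaled_subset_cone_sublevel:
  fixes S1 S2 :: "'a::euclidean_space \<Rightarrow> 'b::euclidean_space"
  assumes lin: "linear S1" "linear S2" and R: "R > 0"
    and S1R: "\<And>x. norm (S1 x) \<le> R * norm x"
    and \<sigma>: "conic \<sigma>" and ball: "cball y \<rho> \<subseteq> \<sigma> \<inter> cball 0 1"
    and \<kappa>: "0 \<le> \<kappa>" and gap: "\<And>x. x \<in> cball y \<rho> \<Longrightarrow> \<kappa> \<le> gap_form S1 S2 x"
  shows "cball (y /\<^sub>R R) (\<rho> / R)
    \<subseteq> {x. norm (S1 x) \<le> 1} \<inter> \<sigma> \<inter> {z. \<kappa> * (norm z)\<^sup>2 \<le> gap_form S1 S2 z}"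
proof
  fix z
  assume "z \<in> cball (y /\<^sub>R R) (\<rho> / R)"
  have "y - R *\<^sub>R z = R *\<^sub>R (y /\<^sub>R R - z)"
    using R by (simp add: algebra_simps)
  then have "dist y (R *\<^sub>R z) = R * dist (y /\<^sub>R R) z"
    using R by (simp add: dist_norm)
  then have x: "R *\<^sub>R z \<in> cball y \<rho>"
    using \<open>z \<in> _\<close> R by (simp add: pos_le_divide_eq mult.commute)
  then have "norm (R *\<^sub>R z) \<le> 1"
    using ball by auto
  then have "z \<in> {x. norm (S1 x) \<le> 1}"
    using S1R[of z] R by simp
  moreover have "z \<in> \<sigma>"
    using conicD[OF \<sigma>, of "R *\<^sub>R z" "1 / R"] x ball R by auto
  moreover have "R *\<^sub>R z \<in> {z. \<kappa> * (norm z)\<^sup>2 \<le> gap_form S1 S2 z}"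
  proof -
    have "\<kappa> * (norm (R *\<^sub>R z))\<^sup>2 \<le> \<kappa>"
      using \<open>norm (R *\<^sub>R z) \<le> 1\<close> \<kappa> by (simp add: mult_left_le power_le_one)
    then show ?thesis
      using gap[OF x] by simp
  qed
  then have "(1 / R) *\<^sub>R (R *\<^sub>R z) \<in> {z. \<kappa> * (norm z)\<^sup>2 \<le> gap_form S1 S2 z}"
    by (rule conicD[OF conic_gap_form_ge[OF lin]]) (use R in simp)
  then have "z \<in> {z. \<kappa> * (norm z)\<^sup>2 \<le> gap_form S1 S2 z}"
    using R by simp
  ultimately show "z \<in> {x. norm (S1 x) \<le> 1} \<inter> \<sigma> \<inter> {z. \<kappa> * (norm z)\<^sup>2 \<le> gap_form S1 S2 z}"
    by blast
qed

text \<open>On the part \<open>P\<close> of \<open>E\<^sub>1 \<inter> \<sigma>\<close> where the gap form is at least \<open>\<kappa> \<parallel>z\<parallel>\<^sup>2\<close>,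
  \<open>\<parallel>S\<^sub>2 z\<parallel>\<^sup>2 \<le> 1 - \<kappa>/R\<^sup>2\<close>; so the dilate \<open>\<mu> P\<close> by \<open>\<mu> = (1 - \<kappa>/R\<^sup>2)\<^sup>-\<^sup>1\<^sup>/\<^sup>2\<close> still
  lies in \<open>E\<^sub>2 \<inter> \<sigma>\<close>, while it leaves \<open>E\<^sub>1\<close> outside \<open>P\<close>.\<close>

lemma dilate_cone_part_subset:
  fixes S1 S2 :: "'a::euclidean_space \<Rightarrow> 'b::euclidean_space"
  assumes lin: "linear S1" "linear S2" and R: "R > 0"
    and S1R: "\<And>x. norm (S1 x) \<le> R * norm x" and \<sigma>: "conic \<sigma>"
    and \<kappa>: "0 \<le> \<kappa>" "\<kappa> < R\<^sup>2"
    and P: "P = {x. norm (S1 x) \<le> 1} \<inter> \<sigma> \<inter> {z. \<kappa> * (norm z)\<^sup>2 \<le> gap_form S1 S2 z}"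
    and \<mu>: "\<mu> = 1 / sqrt (1 - \<kappa> / R\<^sup>2)"
  shows "P \<subseteq> (\<lambda>x. \<mu> *\<^sub>R x) ` P"
    and "(\<lambda>x. \<mu> *\<^sub>R x) ` P - P \<subseteq> ({x. norm (S2 x) \<le> 1} - {x. norm (S1 x) \<le> 1}) \<inter> \<sigma>"
proof -
  define F where "F = {z. \<kappa> * (norm z)\<^sup>2 \<le> gap_form S1 S2 z}"
  have "0 < 1 - \<kappa> / R\<^sup>2" "1 - \<kappa> / R\<^sup>2 \<le> 1"
    using \<kappa> R by (auto simp: field_simps)
  then have \<mu>1: "1 \<le> \<mu>" and \<mu>2: "\<mu>\<^sup>2 * (1 - \<kappa> / R\<^sup>2) = 1"
    unfolding \<mu> by (auto simp: power_divide)
  have F: "c *\<^sub>R z \<in> F" if "z \<in> F" "0 \<le> c" for z c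
    using conicD[OF conic_gap_form_ge[OF lin] that(1)[unfolded F_def] that(2)] by (simp add: F_def)
  have \<sigma>': "c *\<^sub>R z \<in> \<sigma>" if "z \<in> \<sigma>" "0 \<le> c" for z c
    using conicD[OF \<sigma> that] .
  show "P \<subseteq> (\<lambda>x. \<mu> *\<^sub>R x) ` P"
  proof
    fix z
    assume z: "z \<in> P"
    have "inverse \<mu> \<ge> 0" "inverse \<mu> \<le> 1"
      using \<mu>1 by (simp_all add: inverse_le_1_iff)
    then have "norm (S1 (z /\<^sub>R \<mu>)) \<le> norm (S1 z)"
      by (simp add: linear_cmul[OF lin(1)] mult_left_le_one_le)
    then have "z /\<^sub>R \<mu> \<in> P"
      using z F \<sigma>' \<open>inverse \<mu> \<ge> 0\<close> by (auto simp: P F_def[symmetric])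
    moreover have "z = \<mu> *\<^sub>R (z /\<^sub>R \<mu>)"
      using \<mu>1 by simp
    ultimately show "z \<in> (\<lambda>x. \<mu> *\<^sub>R x) ` P"
      by blast
  qed
  have "\<mu> *\<^sub>R z \<in> {x. norm (S2 x) \<le> 1} \<inter> \<sigma> \<inter> F" if z: "z \<in> P" for z
  proof -
    have "(norm (S2 z))\<^sup>2 \<le> 1 - \<kappa> / R\<^sup>2"
      using z \<kappa> by (intro norm_sq_le_of_gap_form_ge[OF R S1R]) (auto simp: P)
    then have "\<mu>\<^sup>2 * (norm (S2 z))\<^sup>2 \<le> 1"
      using mult_left_mono[of _ "1 - \<kappa> / R\<^sup>2" "\<mu>\<^sup>2"] \<mu>2 by simp
    then have "(norm (S2 (\<mu> *\<^sub>R z)))\<^sup>2 \<le> 1"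
      using \<mu>1 by (simp add: linear_cmul[OF lin(2)] power_mult_distrib)
    then show ?thesis
      using z \<mu>1 F \<sigma>' by (auto simp: P F_def[symmetric] power_le_one_iff)
  qed
  then show "(\<lambda>x. \<mu> *\<^sub>R x) ` P - P \<subseteq> ({x. norm (S2 x) \<le> 1} - {x. norm (S1 x) \<le> 1}) \<inter> \<sigma>"
    by (auto simp: P F_def[symmetric])
qed

lemma measure_cone_diff_ge:
  fixes S1 S2 :: "'a::euclidean_space \<Rightarrow> 'b::euclidean_space"
  assumes lin: "linear S1" "linear S2" and R: "R > 0"
    and S1R: "\<And>x. norm (S1 x) \<le> R * norm x"
    and E1: "E1 = {x. norm (S1 x) \<le> 1}" "E1 \<in> lmeasurable"
    and E2: "E2 = {x. norm (S2 x) \<le> 1}" "E2 \<in> lmeasurable"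
    and \<sigma>: "conic \<sigma>" "\<sigma> \<in> sets lebesgue"
    and ball: "cball y \<rho> \<subseteq> \<sigma> \<inter> cball 0 1" "\<rho> \<ge> 0"
    and \<kappa>: "0 \<le> \<kappa>" "\<kappa> < R\<^sup>2" and gap: "\<And>x. x \<in> cball y \<rho> \<Longrightarrow> \<kappa> \<le> gap_form S1 S2 x"
  shows "\<kappa> / (2 * R\<^sup>2) * (unit_ball_vol DIM('a) * (\<rho> / R) ^ DIM('a))
    \<le> measure lebesgue ((E2 - E1) \<inter> \<sigma>)"
proof -
  define \<mu> where "\<mu> = 1 / sqrt (1 - \<kappa> / R\<^sup>2)"
  define P where "P = E1 \<inter> \<sigma> \<inter> {z. \<kappa> * (norm z)\<^sup>2 \<le> gap_form S1 S2 z}"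
  have P_dilate: "P \<subseteq> (\<lambda>x. \<mu> *\<^sub>R x) ` P" "(\<lambda>x. \<mu> *\<^sub>R x) ` P - P \<subseteq> (E2 - E1) \<inter> \<sigma>"
    using dilate_cone_part_subset[OF lin R S1R \<sigma>(1) \<kappa> P_def[unfolded E1(1)] \<mu>_def]
    unfolding E1(1) E2(1) by simp_all
  have "0 < 1 - \<kappa> / R\<^sup>2" "1 - \<kappa> / R\<^sup>2 \<le> 1"
    using \<kappa> R by (auto simp: field_simps)
  then have "\<kappa> / (2 * R\<^sup>2) \<le> \<mu> - 1" "1 \<le> \<mu>"
    using inverse_sqrt_sub_one_ge[of "1 - \<kappa> / R\<^sup>2"] by (simp_all add: \<mu>_def)
  then have growth: "\<kappa> / (2 * R\<^sup>2) \<le> \<mu> ^ DIM('a) - 1" "0 \<le> \<mu> ^ DIM('a) - 1"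
    using power_increasing[of 1 "DIM('a)" \<mu>] by (simp_all add: DIM_positive Suc_leI)
  have "{z. \<kappa> * (norm z)\<^sup>2 \<le> gap_form S1 S2 z} \<in> sets lebesgue"
    by (auto intro!: borel_closed closed_Collect_le continuous_intros continuous_on_gap_form[OF lin])
  then have P: "P \<in> lmeasurable"
    unfolding P_def by (intro fmeasurable_Int_fmeasurable E1(2) \<sigma>(2))
  have "cball (y /\<^sub>R R) (\<rho> / R) \<subseteq> P"
    using cball_scaled_subset_cone_sublevel[OF lin R S1R \<sigma>(1) ball(1) \<kappa>(1) gap]
    by (simp add: P_def E1(1))
  then have "measure lebesgue (cball (y /\<^sub>R R) (\<rho> / R)) \<le> measure lebesgue P"
    by (rule measure_mono_fmeasurable[OF _ fmeasurableD[OF lmeasurable_cball] P])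
  then have ball_P: "unit_ball_vol DIM('a) * (\<rho> / R) ^ DIM('a) \<le> measure lebesgue P"
    using measure_lebesgue_cball[of "\<rho> / R" "y /\<^sub>R R"] ball(2) R by simp
  have "0 \<le> unit_ball_vol DIM('a) * (\<rho> / R) ^ DIM('a)"
    using ball(2) R by simp
  then have "\<kappa> / (2 * R\<^sup>2) * (unit_ball_vol DIM('a) * (\<rho> / R) ^ DIM('a))
      \<le> (\<mu> ^ DIM('a) - 1) * measure lebesgue P"
    using growth ball_P by (intro mult_mono) auto
  also have "\<dots> = measure lebesgue ((\<lambda>x. \<mu> *\<^sub>R x) ` P - P)"
    using measure_scaleR_image_diff[OF P \<open>1 \<le> \<mu>\<close> P_dilate(1)] by simp
  also have "\<dots> \<le> measure lebesgue ((E2 - E1) \<inter> \<sigma>)"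
  proof (rule measure_mono_fmeasurable[OF P_dilate(2)])
    show "(\<lambda>x. \<mu> *\<^sub>R x) ` P - P \<in> sets lebesgue"
      using lmeasurable_scaleR_image[OF P, of \<mu>] P \<open>1 \<le> \<mu>\<close> by (auto intro: fmeasurableD)
    show "(E2 - E1) \<inter> \<sigma> \<in> lmeasurable"
      using E1(2) E2(2) \<sigma>(2) by (intro fmeasurable_Int_fmeasurable fmeasurable_Diff) (auto intro: fmeasurableD)
  qed
  finally show ?thesis .
qed

lemma measure_diff_Int_le_symdiff_Int:
  assumes "A \<in> lmeasurable" "B \<in> lmeasurable" "C \<in> sets lebesgue"
  shows "measure lebesgue ((A - B) \<inter> C) \<le> measure lebesgue (symdiff A B \<inter> C)"
    and "measure lebesgue ((B - A) \<inter> C) \<le> measure lebesgue (symdiff A B \<inter> C)"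
proof -
  have "symdiff A B \<inter> C \<in> lmeasurable"
    unfolding symdiff_def using assms
    by (intro fmeasurable_Int_fmeasurable fmeasurable.Un fmeasurable_Diff) (auto intro: fmeasurableD)
  moreover have "(A - B) \<inter> C \<in> sets lebesgue" "(B - A) \<inter> C \<in> sets lebesgue"
    using assms by (auto intro: fmeasurableD)
  ultimately show "measure lebesgue ((A - B) \<inter> C) \<le> measure lebesgue (symdiff A B \<inter> C)"
    and "measure lebesgue ((B - A) \<inter> C) \<le> measure lebesgue (symdiff A B \<inter> C)"
    by (auto intro!: measure_mono_fmeasurable simp: symdiff_def)
qed

text \<open>Among \<open>x\<^sub>0\<close> and \<open>x\<^sub>0 \<plusminus> (t/2) v\<close> the second-difference identity finds a point \<open>y\<close> with
  \<open>|q y| \<ge> M t\<^sup>2/8\<close>; the bilinear estimate moves \<open>q\<close> by at most \<open>3 M \<rho> = 3 M t\<^sup>2/64\<close> on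
  \<open>B(y, \<rho>)\<close>, which leaves a margin of \<open>M t\<^sup>2/16\<close>.\<close>

lemma gap_form_one_sign_on_ball:
  fixes S1 S2 :: "'a::real_inner \<Rightarrow> 'b::real_inner"
  assumes lin: "linear S1" "linear S2"
    and v: "norm v = 1" "\<And>u. norm u = 1 \<Longrightarrow> \<bar>gap_form S1 S2 u\<bar> \<le> \<bar>gap_form S1 S2 v\<bar>"
    and ball: "cball x0 t \<subseteq> cball 0 1" "0 \<le> t" "t \<le> 1"
  obtains y where "cball y (t\<^sup>2 / 64) \<subseteq> cball x0 t"
    and "(\<forall>x \<in> cball y (t\<^sup>2 / 64). \<bar>gap_form S1 S2 v\<bar> * t\<^sup>2 / 16 \<le> gap_form S1 S2 x)
      \<or> (\<forall>x \<in> cball y (t\<^sup>2 / 64). \<bar>gap_form S1 S2 v\<bar> * t\<^sup>2 / 16 \<le> gap_form S2 S1 x)"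
proof -
  define M where "M = \<bar>gap_form S1 S2 v\<bar>"
  define \<rho> where "\<rho> = t\<^sup>2 / 64"
  have bound: "\<bar>gap_form S1 S2 u\<bar> \<le> M" if "norm u = 1" for u
    using v(2)[OF that] by (simp add: M_def)
  have "t * t \<le> t"
    using ball(3,2) by (rule mult_left_le)
  then have \<rho>: "0 \<le> \<rho>" "\<rho> \<le> t / 2"
    using ball(2) by (simp_all add: \<rho>_def power2_eq_square)
  obtain y where y: "dist x0 y \<le> t / 2" "(t / 2)\<^sup>2 * M / 2 \<le> \<bar>gap_form S1 S2 y\<bar>"
    using exists_near_gap_form_ge[OF lin v(1), of "t / 2" x0] ball(2) by (auto simp: M_def)
  have sub: "cball y \<rho> \<subseteq> cball x0 t"
  proof
    fix z
    assume "z \<in> cball y \<rho>"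
    then show "z \<in> cball x0 t"
      using y(1) \<rho>(2) dist_triangle[of x0 z y] by simp
  qed
  have "y \<in> cball y \<rho>"
    using \<rho>(1) by simp
  then have "y \<in> cball 0 1"
    using sub ball(1) by blast
  then have "norm y \<le> 1"
    by simp
  have close: "gap_form S1 S2 y - 3 * M * \<rho> \<le> gap_form S1 S2 x"
    "gap_form S1 S2 x \<le> gap_form S1 S2 y + 3 * M * \<rho>" if "x \<in> cball y \<rho>" for x
    using gap_form_close[OF lin bound _ \<open>norm y \<le> 1\<close>, of x \<rho>] that \<rho>(2) ball(3)
    by (simp_all add: M_def abs_le_iff)
  have "0 \<le> M * t\<^sup>2"
    by (simp add: M_def)
  then have margin: "M * t\<^sup>2 / 16 \<le> (t / 2)\<^sup>2 * M / 2 - 3 * M * \<rho>"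
    by (simp add: \<rho>_def power_divide)
  show thesis
  proof (cases "0 \<le> gap_form S1 S2 y")
    case True
    then have "M * t\<^sup>2 / 16 \<le> gap_form S1 S2 x" if "x \<in> cball y \<rho>" for x
      using close(1)[OF that] y(2) margin abs_of_nonneg[OF True] by linarith
    with sub show thesis
      using that by (simp add: M_def \<rho>_def)
  next
    case False
    then have "\<bar>gap_form S1 S2 y\<bar> = - gap_form S1 S2 y"
      by simp
    then have "M * t\<^sup>2 / 16 \<le> gap_form S2 S1 x" if "x \<in> cball y \<rho>" for x
      using close(2)[OF that] y(2) margin gap_form_swap[of S2 S1 x] by linarith
    with sub show thesis
      using that by (simp add: M_def \<rho>_def)
  qed
qed

lemma measure_cone_symdiff_ge_gap_form:
  fixes S1 S2 :: "'a::euclidean_space \<Rightarrow> 'b::euclidean_space"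
  assumes lin: "linear S1" "linear S2" and R: "R > 0"
    and E1: "E1 = {x. norm (S1 x) \<le> 1}" "cball 0 (1/R) \<subseteq> E1" "E1 \<subseteq> cball 0 R"
    and E2: "E2 = {x. norm (S2 x) \<le> 1}" "cball 0 (1/R) \<subseteq> E2" "E2 \<subseteq> cball 0 R"
    and \<sigma>: "conic \<sigma>" "\<sigma> \<in> sets lebesgue"
    and ball: "cball x0 t \<subseteq> \<sigma> \<inter> cball 0 1" "0 \<le> t" "t \<le> 1"
    and v: "norm v = 1" "\<And>u. norm u = 1 \<Longrightarrow> \<bar>gap_form S1 S2 u\<bar> \<le> \<bar>gap_form S1 S2 v\<bar>"
  shows "t\<^sup>2 / (32 * R\<^sup>2) * (unit_ball_vol DIM('a) * (t\<^sup>2 / (64 * R)) ^ DIM('a)) * \<bar>gap_form S1 S2 v\<bar>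
    \<le> measure lebesgue (symdiff E1 E2 \<inter> \<sigma>)"
proof -
  define \<rho> where "\<rho> = t\<^sup>2 / 64"
  define \<kappa> where "\<kappa> = \<bar>gap_form S1 S2 v\<bar> * t\<^sup>2 / 16"
  have S1R: "norm (S1 x) \<le> R * norm x" and S2R: "norm (S2 x) \<le> R * norm x" for x
    using norm_le_of_cball_subset_sublevel[OF lin(1) R] norm_le_of_cball_subset_sublevel[OF lin(2) R]
      E1(1,2) E2(1,2) by simp_all
  have meas: "E1 \<in> lmeasurable" "E2 \<in> lmeasurable"
    using lmeasurable_sublevel_linear[OF lin(1)] lmeasurable_sublevel_linear[OF lin(2)]
      bounded_subset[OF bounded_cball E1(3)] bounded_subset[OF bounded_cball E2(3)] E1(1) E2(1)
    by simp_all
  have "\<bar>gap_form S1 S2 v\<bar> \<le> R\<^sup>2"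
    using gap_form_le_of_norm_le[of S1 v R S2] S1R[of v] S2R[of v] v(1) by simp
  moreover have "t\<^sup>2 \<le> 1"
    using ball(2,3) by (simp add: power_le_one)
  ultimately have "\<bar>gap_form S1 S2 v\<bar> * t\<^sup>2 \<le> R\<^sup>2 * 1"
    by (intro mult_mono) auto
  moreover have "0 \<le> \<bar>gap_form S1 S2 v\<bar> * t\<^sup>2"
    by simp
  ultimately have \<kappa>: "0 \<le> \<kappa>" "\<kappa> < R\<^sup>2"
    unfolding \<kappa>_def using zero_less_power[OF R, of 2] by linarith+
  have \<rho>: "0 \<le> \<rho>"
    by (simp add: \<rho>_def)
  have "cball x0 t \<subseteq> cball 0 1"
    using ball(1) by blast
  then obtain y where "cball y \<rho> \<subseteq> cball x0 t"
    and sign: "(\<forall>x \<in> cball y \<rho>. \<kappa> \<le> gap_form S1 S2 x) \<or> (\<forall>x \<in> cball y \<rho>. \<kappa> \<le> gap_form S2 S1 x)"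
    using gap_form_one_sign_on_ball[OF lin v] ball(2,3) unfolding \<kappa>_def \<rho>_def by blast
  then have ball_y: "cball y \<rho> \<subseteq> \<sigma> \<inter> cball 0 1"
    using ball(1) by blast
  from sign have "\<kappa> / (2 * R\<^sup>2) * (unit_ball_vol DIM('a) * (\<rho> / R) ^ DIM('a))
      \<le> measure lebesgue (symdiff E1 E2 \<inter> \<sigma>)"
  proof
    assume "\<forall>x \<in> cball y \<rho>. \<kappa> \<le> gap_form S1 S2 x"
    from measure_cone_diff_ge[OF lin R S1R E1(1) meas(1) E2(1) meas(2) \<sigma> ball_y \<rho> \<kappa>] this
    show ?thesis
      using measure_diff_Int_le_symdiff_Int(2)[OF meas \<sigma>(2)] by auto
  next
    assume "\<forall>x \<in> cball y \<rho>. \<kappa> \<le> gap_form S2 S1 x"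
    from measure_cone_diff_ge[OF lin(2,1) R S2R E2(1) meas(2) E1(1) meas(1) \<sigma> ball_y \<rho> \<kappa>] this
    show ?thesis
      using measure_diff_Int_le_symdiff_Int(1)[OF meas \<sigma>(2)] by auto
  qed
  then show ?thesis
    by (simp add: \<kappa>_def \<rho>_def field_simps)
qed

lemma measure_symdiff_le_cone_symdiff:
  fixes \<sigma> E1 E2 :: "'a::euclidean_space set"
  assumes R: "R > 0" and t: "0 \<le> t" "t \<le> 1"
    and \<sigma>: "convex_cone \<sigma>" "t < inradius (\<sigma> \<inter> cball 0 1)"
    and E1: "sym_ellipsoid E1" "cball 0 (1/R) \<subseteq> E1" "E1 \<subseteq> cball 0 R"
    and E2: "sym_ellipsoid E2" "cball 0 (1/R) \<subseteq> E2" "E2 \<subseteq> cball 0 R"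
  shows "t\<^sup>2 / (32 * R\<^sup>2) * (unit_ball_vol DIM('a) * (t\<^sup>2 / (64 * R)) ^ DIM('a))
      * measure lebesgue (symdiff E1 E2)
    \<le> 2 * real DIM('a) * R\<^sup>2 * (1 + R ^ 4) ^ DIM('a) * (unit_ball_vol DIM('a) * R ^ DIM('a))
      * measure lebesgue (symdiff E1 E2 \<inter> \<sigma>)"
proof -
  define c where "c = t\<^sup>2 / (32 * R\<^sup>2) * (unit_ball_vol DIM('a) * (t\<^sup>2 / (64 * R)) ^ DIM('a))"
  define K where "K = 2 * real DIM('a) * R\<^sup>2 * (1 + R ^ 4) ^ DIM('a) * (unit_ball_vol DIM('a) * R ^ DIM('a))"
  obtain S1 :: "'a \<Rightarrow> 'a" where S1: "linear S1" "E1 = {x. norm (S1 x) \<le> 1}"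
    using sym_ellipsoid_sublevel[OF E1(1)] by blast
  obtain S2 :: "'a \<Rightarrow> 'a" where S2: "linear S2" "E2 = {x. norm (S2 x) \<le> 1}"
    using sym_ellipsoid_sublevel[OF E2(1)] by blast
  obtain v where v: "norm v = 1" "\<And>u. norm u = 1 \<Longrightarrow> \<bar>gap_form S1 S2 u\<bar> \<le> \<bar>gap_form S1 S2 v\<bar>"
    using gap_form_attains_max_on_sphere[OF S1(1) S2(1)] by blast
  have cone: "conic \<sigma>" "\<sigma> \<in> sets lebesgue" "0 \<in> \<sigma>"
    using \<sigma>(1) by (auto simp: convex_cone_def sets_lebesgue_convex convex_cone_contains_0)
  then have "bounded (\<sigma> \<inter> cball 0 1)" "\<sigma> \<inter> cball 0 1 \<noteq> {}"
    by auto
  then obtain x0 where "cball x0 t \<subseteq> \<sigma> \<inter> cball 0 1"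
    using \<sigma>(2) by (rule inradius_cball_subset)
  from measure_cone_symdiff_ge_gap_form[OF S1(1) S2(1) R S1(2) E1(2,3) S2(2) E2(2,3) cone(1,2) this t v]
  have lower: "c * \<bar>gap_form S1 S2 v\<bar> \<le> measure lebesgue (symdiff E1 E2 \<inter> \<sigma>)"
    by (simp add: c_def)
  have "0 \<le> c"
    using R t by (simp add: c_def)
  moreover have "measure lebesgue (symdiff E1 E2) \<le> K * \<bar>gap_form S1 S2 v\<bar>"
    using measure_symdiff_le_gap_form[OF S1(1) S2(1) R S1(2) E1(2,3) S2(2) E2(2,3) v]
    by (simp add: K_def)
  ultimately have "c * measure lebesgue (symdiff E1 E2) \<le> K * (c * \<bar>gap_form S1 S2 v\<bar>)"
    by (metis mult.left_commute mult_left_mono)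
  also have "\<dots> \<le> K * measure lebesgue (symdiff E1 E2 \<inter> \<sigma>)"
    using lower R by (intro mult_left_mono) (simp_all add: K_def)
  finally show ?thesis
    by (simp add: c_def K_def)
qed

theorem mainTheorem11:
  fixes R s :: real
  assumes "DIM('a::euclidean_space) \<ge> 2" and "R > 1" and "0 < s" and "s < 1/2"
  shows "\<exists>\<delta> C. \<delta> > 0 \<and> C > 0 \<and>
    (\<forall>(\<sigma>::'a set) E1 E2. convex_cone \<sigma> \<and> inradius (\<sigma> \<inter> cball 0 1) \<ge> s \<and>
       sym_ellipsoid E1 \<and> sym_ellipsoid E2 \<and>
       cball 0 (1/R) \<subseteq> E1 \<and> E1 \<subseteq> cball 0 R \<and>
       cball 0 (1/R) \<subseteq> E2 \<and> E2 \<subseteq> cball 0 R \<and>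
       measure lebesgue (symdiff E1 E2 \<inter> \<sigma>) \<le> \<delta>
     \<longrightarrow> measure lebesgue (symdiff E1 E2) \<le> C * measure lebesgue (symdiff E1 E2 \<inter> \<sigma>))"
proof -
  define n where "n = DIM('a)"
  define t where "t = s / 2"
  define K where "K = 2 * real n * R\<^sup>2 * (1 + R ^ 4) ^ n * (unit_ball_vol n * R ^ n)"
  define c where "c = t\<^sup>2 / (32 * R\<^sup>2) * (unit_ball_vol n * (t\<^sup>2 / (64 * R)) ^ n)"
  have "0 < K"
    unfolding K_def n_def using assms(2)
    by (intro mult_pos_pos zero_less_power add_pos_pos) (simp_all add: DIM_positive)
  have "0 < t" "t \<le> 1"
    using assms(3,4) by (simp_all add: t_def)
  then have "0 < c"
    unfolding c_def using assms(2) by (intro mult_pos_pos divide_pos_pos zero_less_power) simp_all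
  have "measure lebesgue (symdiff E1 E2) \<le> K / c * measure lebesgue (symdiff E1 E2 \<inter> \<sigma>)"
    if "convex_cone \<sigma>" "s \<le> inradius (\<sigma> \<inter> cball 0 1)" "sym_ellipsoid E1" "sym_ellipsoid E2"
      "cball 0 (1/R) \<subseteq> E1" "E1 \<subseteq> cball 0 R" "cball 0 (1/R) \<subseteq> E2" "E2 \<subseteq> cball 0 R"
    for \<sigma> E1 E2 :: "'a set"
  proof -
    have "t < inradius (\<sigma> \<inter> cball 0 1)"
      using that(2) assms(3) by (simp add: t_def)
    with measure_symdiff_le_cone_symdiff[of R t \<sigma> E1 E2] that assms(2) \<open>0 < t\<close> \<open>t \<le> 1\<close>
    have "c * measure lebesgue (symdiff E1 E2) \<le> K * measure lebesgue (symdiff E1 E2 \<inter> \<sigma>)"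
      by (simp add: c_def K_def n_def)
    with \<open>0 < c\<close> show ?thesis
      by (simp add: field_simps)
  qed
  then show ?thesis
    using \<open>0 < K\<close> \<open>0 < c\<close> by (intro exI[of _ 1] exI[of _ "K / c"]) auto
qed

end
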